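(* Let $G=\overline{B(K_m,K_n)}$ be word-representable and let $S$ be a semi-transitive orientation of $G$. Let $x,y$ be vertices of the same clique (say $K_m$) such that $x$ is of type A, $y$ is of type B (with respect to the other clique $K_n$), and the edge between them is oriented $y\to x$. Then $x$ and $y$ have no common neighbour in the other clique $K_n$.
   Context: $\overline{B(K_m,K_n)}$ denotes a graph whose vertex set is the disjoint union of two cliques $K_m$ and $K_n$ with arbitrary edges between them. An orientation is semi-transitive if it is acyclic and shortcut-free, where a shortcut is an induced subgraph on vertices $v_0,\dots,v_t$ ($t\ge 3$) such that $v_0\to\cdots\to v_t$ is a directed path, $v_0\to v_t$ is an edge, and some pair $v_i,v_j$ is non-adjacent. Such an orientation induces a transitive orientation on each clique. For a vertex $x$ in one clique and the other clique $K'$ with Hamiltonian path $p_1\to\cdots\to p_l$: $x$ is of type A if its neighbours in $K'$ are consecutive vertices $p_a,\dots,p_b$ of this path (possibly none) and all edges between $x$ and them are directed away from $x$; type B if the same holds with these edges directed towards $x$. *)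

theory Defs
  imports Main
begin

definition simple_graph :: "'a set \<Rightarrow> ('a \<Rightarrow> 'a \<Rightarrow> bool) \<Rightarrow> bool" where
  "simple_graph V E \<longleftrightarrow> finite V \<and> (\<forall>u v. E u v \<longrightarrow> u \<in> V \<and> v \<in> V \<and> u \<noteq> v \<and> E v u)"

definition alternate_in :: "'a list \<Rightarrow> 'a \<Rightarrow> 'a \<Rightarrow> bool" where
  "alternate_in w x y \<longleftrightarrow>
     (let f = filter (\<lambda>z. z = x \<or> z = y) w in \<forall>i. Suc i < length f \<longrightarrow> f ! i \<noteq> f ! Suc i)"

definition word_representable :: "'a set \<Rightarrow> ('a \<Rightarrow> 'a \<Rightarrow> bool) \<Rightarrow> bool" where
  "word_representable V E \<longleftrightarrow>
     (\<exists>w. set w = V \<and>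
       (\<forall>x\<in>V. \<forall>y\<in>V. x \<noteq> y \<longrightarrow> (E x y \<longleftrightarrow> alternate_in w x y)))"

definition orientation :: "'a set \<Rightarrow> ('a \<Rightarrow> 'a \<Rightarrow> bool) \<Rightarrow> ('a \<Rightarrow> 'a \<Rightarrow> bool) \<Rightarrow> bool" where
  "orientation V E D \<longleftrightarrow>
     (\<forall>u v. D u v \<longrightarrow> E u v) \<and> (\<forall>u v. E u v \<longrightarrow> (D u v \<longleftrightarrow> \<not> D v u))"

definition acyclic_orient :: "('a \<Rightarrow> 'a \<Rightarrow> bool) \<Rightarrow> bool" where
  "acyclic_orient D \<longleftrightarrow> (\<forall>x. \<not> D\<^sup>+\<^sup>+ x x)"

definition is_shortcut :: "('a \<Rightarrow> 'a \<Rightarrow> bool) \<Rightarrow> ('a \<Rightarrow> 'a \<Rightarrow> bool) \<Rightarrow> 'a list \<Rightarrow> bool" where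
  "is_shortcut E D vs \<longleftrightarrow>
     length vs \<ge> 4 \<and> distinct vs \<and>
     (\<forall>i. Suc i < length vs \<longrightarrow> D (vs ! i) (vs ! Suc i)) \<and>
     D (hd vs) (last vs) \<and>
     (\<exists>i j. i < length vs \<and> j < length vs \<and> i \<noteq> j \<and> \<not> E (vs ! i) (vs ! j))"

definition semi_transitive_orientation ::
  "'a set \<Rightarrow> ('a \<Rightarrow> 'a \<Rightarrow> bool) \<Rightarrow> ('a \<Rightarrow> 'a \<Rightarrow> bool) \<Rightarrow> bool" where
  "semi_transitive_orientation V E D \<longleftrightarrow>
     orientation V E D \<and> acyclic_orient D \<and>
     (\<nexists>vs. set vs \<subseteq> V \<and> is_shortcut E D vs)"

definition is_clique :: "('a \<Rightarrow> 'a \<Rightarrow> bool) \<Rightarrow> 'a set \<Rightarrow> bool" where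
  "is_clique E K \<longleftrightarrow> (\<forall>u\<in>K. \<forall>v\<in>K. u \<noteq> v \<longrightarrow> E u v)"

definition ham_path :: "('a \<Rightarrow> 'a \<Rightarrow> bool) \<Rightarrow> 'a set \<Rightarrow> 'a list \<Rightarrow> bool" where
  "ham_path D K p \<longleftrightarrow> distinct p \<and> set p = K \<and>
     (\<forall>i. Suc i < length p \<longrightarrow> D (p ! i) (p ! Suc i))"

definition nbrs_consecutive :: "('a \<Rightarrow> 'a \<Rightarrow> bool) \<Rightarrow> 'a \<Rightarrow> 'a set \<Rightarrow> 'a list \<Rightarrow> bool" where
  "nbrs_consecutive E x K p \<longleftrightarrow>
     (\<exists>a b. {v\<in>K. E x v} = {p ! k | k. a \<le> k \<and> k \<le> b \<and> k < length p})"

definition typeA :: "('a \<Rightarrow> 'a \<Rightarrow> bool) \<Rightarrow> ('a \<Rightarrow> 'a \<Rightarrow> bool) \<Rightarrow> 'a \<Rightarrow> 'a set \<Rightarrow> bool" where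
  "typeA E D x K \<longleftrightarrow>
     (\<exists>p. ham_path D K p \<and> nbrs_consecutive E x K p \<and> (\<forall>v\<in>K. E x v \<longrightarrow> D x v))"

definition typeB :: "('a \<Rightarrow> 'a \<Rightarrow> bool) \<Rightarrow> ('a \<Rightarrow> 'a \<Rightarrow> bool) \<Rightarrow> 'a \<Rightarrow> 'a set \<Rightarrow> bool" where
  "typeB E D x K \<longleftrightarrow>
     (\<exists>p. ham_path D K p \<and> nbrs_consecutive E x K p \<and> (\<forall>v\<in>K. E x v \<longrightarrow> D v x))"

end

theory Submission
  imports Defs
begin

(* A common neighbour z would close the directed triangle y -> x -> z -> y, so acyclicity
   alone suffices. *)

lemma acyclic_orient_no_directed_triangle:
  assumes "acyclic_orient D" and "D a b" and "D b c"
  shows "\<not> D c a"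
proof
  assume "D c a"
  with assms(2,3) have "D\<^sup>+\<^sup>+ a a"
    by (blast intro: tranclp.r_into_trancl tranclp.trancl_into_trancl)
  with assms(1) show False
    unfolding acyclic_orient_def by blast
qed

lemma typeA_neighbour_out:
  assumes "typeA E D x K" and "v \<in> K" and "E x v"
  shows "D x v"
  using assms unfolding typeA_def by blast

lemma typeB_neighbour_in:
  assumes "typeB E D x K" and "v \<in> K" and "E x v"
  shows "D v x"
  using assms unfolding typeB_def by blast

theorem mainTheorem11:
  fixes K1 K2 :: "'a set" and E D :: "'a \<Rightarrow> 'a \<Rightarrow> bool" and x y :: 'a
  assumes "simple_graph (K1 \<union> K2) E"
    and "K1 \<inter> K2 = {}"
    and "is_clique E K1" and "is_clique E K2"
    and "word_representable (K1 \<union> K2) E"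
    and "semi_transitive_orientation (K1 \<union> K2) E D"
    and "x \<in> K1" and "y \<in> K1"
    and "typeA E D x K2" and "typeB E D y K2"
    and "D y x"
  shows "\<not> (\<exists>z\<in>K2. E x z \<and> E y z)"
proof
  assume "\<exists>z\<in>K2. E x z \<and> E y z"
  then obtain z where "z \<in> K2" "E x z" "E y z" by blast
  then have "D x z" and "D z y"
    using typeA_neighbour_out[OF assms(9)] typeB_neighbour_in[OF assms(10)] by simp_all
  moreover have "acyclic_orient D"
    using assms(6) unfolding semi_transitive_orientation_def by blast
  ultimately show False
    using assms(11) acyclic_orient_no_directed_triangle by metis
qed

end
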